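(* Consider the network Polya contagion process on a connected undirected graph $\mathcal{G}=(V,\mathcal{E})$ with $\Delta_{r,i}(n)=\Delta_{b,i}(n)=\Delta$ and $T_i=T$ for all nodes $i\in V$ and all times $n$. Fix a node $i$. Then the individual red-ball proportion process $\{U_{i,n}\}_{n=1}^\infty$ is a martingale with respect to the whole-network draw process $\{Z_n\}_{n=1}^\infty=\{(Z_{1,n},\dots,Z_{N,n})\}_{n=1}^\infty$ if and only if, almost surely (for all $n$), \[ \frac{1}{|\mathcal{N}_i|}\sum_{j\in\mathcal{N}_i}U_{j,n-1}=U_{i,n-1}. \]
   Context: Network Polya contagion process: $\mathcal{G}=(V,\mathcal{E})$ is a connected undirected graph without self-loops, $V=\{1,\dots,N\}$, $\mathcal{N}_i=\{v:(i,v)\in\mathcal{E}\}$, $\mathcal{N}_i'=\{i\}\cup\mathcal{N}_i$. Each node $i$ has an urn initially containing $R_i\in\mathbb{Z}_{>0}$ red and $B_i\in\mathbb{Z}_{>0}$ black balls, $T_i=R_i+B_i$. The super urn of node $i$ is the union of the urns of nodes in $\mathcal{N}_i'$. At each time $t=1,2,\dots$ every node $i$ simultaneously draws from its super urn; $Z_{i,t}=1$ if red, $0$ if black; then $\Delta_{r,i}(t)\ge0$ red balls (if red drawn) or $\Delta_{b,i}(t)\ge0$ black balls (if black drawn) are added to node $i$'s own urn. Let $X_{j,n}=T_j+\sum_{t=1}^n\big(Z_{j,t}\Delta_{r,j}(t)+(1-Z_{j,t})\Delta_{b,j}(t)\big)$ and $U_{j,n}=\big(R_j+\sum_{t=1}^nZ_{j,t}\Delta_{r,j}(t)\big)/X_{j,n}$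 (proportion of red balls in node $j$'s own urn after the $n$th draw), and $S_{i,n}=\sum_{j\in\mathcal{N}_i'}U_{j,n}X_{j,n}/\sum_{j\in\mathcal{N}_i'}X_{j,n}$ (proportion of red in node $i$'s super urn). Given the whole history $\{Z_j^{n-1}\}_{j=1}^N$, the time-$n$ draws are conditionally independent with $P(Z_{i,n}=1\mid\{Z_j^{n-1}\}_{j=1}^N)=S_{i,n-1}$. "Martingale with respect to $\{Z_n\}$" means $E|U_{i,n}|<\infty$ and $E[U_{i,n}\mid Z_1,\dots,Z_{n-1}]=U_{i,n-1}$ a.s. for all $n$. *)

theory Defs
  imports "HOL-Probability.Probability"
begin

definition simple_graph :: "nat \<Rightarrow> (nat \<Rightarrow> nat \<Rightarrow> bool) \<Rightarrow> bool" where
  "simple_graph N E \<longleftrightarrow>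
     (\<forall>i j. E i j \<longrightarrow> i \<in> {1..N} \<and> j \<in> {1..N}) \<and>
     (\<forall>i j. E i j \<longrightarrow> E j i) \<and> (\<forall>i. \<not> E i i)"

definition connected_graph :: "nat \<Rightarrow> (nat \<Rightarrow> nat \<Rightarrow> bool) \<Rightarrow> bool" where
  "connected_graph N E \<longleftrightarrow> (\<forall>i\<in>{1..N}. \<forall>j\<in>{1..N}. E\<^sup>*\<^sup>* i j)"

definition nbrs :: "nat \<Rightarrow> (nat \<Rightarrow> nat \<Rightarrow> bool) \<Rightarrow> nat \<Rightarrow> nat set" where
  "nbrs N E i = {v \<in> {1..N}. E i v}"

definition cnbrs :: "nat \<Rightarrow> (nat \<Rightarrow> nat \<Rightarrow> bool) \<Rightarrow> nat \<Rightarrow> nat set" where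
  "cnbrs N E i = insert i (nbrs N E i)"

text \<open>A (realised) draw history z: z t j = True iff node j drew red at time t.
  Dr j t, Db j t: red/black reinforcement of node j at time t.\<close>

definition Xballs :: "(nat \<Rightarrow> nat) \<Rightarrow> (nat \<Rightarrow> nat) \<Rightarrow> (nat \<Rightarrow> nat \<Rightarrow> nat) \<Rightarrow> (nat \<Rightarrow> nat \<Rightarrow> nat)
     \<Rightarrow> (nat \<Rightarrow> nat \<Rightarrow> bool) \<Rightarrow> nat \<Rightarrow> nat \<Rightarrow> real" where
  "Xballs R B Dr Db z j n =
     real (R j + B j) + (\<Sum>t\<in>{1..n}. if z t j then real (Dr j t) else real (Db j t))"

definition Uprop :: "(nat \<Rightarrow> nat) \<Rightarrow> (nat \<Rightarrow> nat) \<Rightarrow> (nat \<Rightarrow> nat \<Rightarrow> nat) \<Rightarrow> (nat \<Rightarrow> nat \<Rightarrow> nat)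
     \<Rightarrow> (nat \<Rightarrow> nat \<Rightarrow> bool) \<Rightarrow> nat \<Rightarrow> nat \<Rightarrow> real" where
  "Uprop R B Dr Db z j n =
     (real (R j) + (\<Sum>t\<in>{1..n}. if z t j then real (Dr j t) else 0)) / Xballs R B Dr Db z j n"

definition Sprop :: "nat \<Rightarrow> (nat \<Rightarrow> nat \<Rightarrow> bool) \<Rightarrow> (nat \<Rightarrow> nat) \<Rightarrow> (nat \<Rightarrow> nat)
     \<Rightarrow> (nat \<Rightarrow> nat \<Rightarrow> nat) \<Rightarrow> (nat \<Rightarrow> nat \<Rightarrow> nat) \<Rightarrow> (nat \<Rightarrow> nat \<Rightarrow> bool) \<Rightarrow> nat \<Rightarrow> nat \<Rightarrow> real" where
  "Sprop N E R B Dr Db z i n =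
     (\<Sum>j\<in>cnbrs N E i. Uprop R B Dr Db z j n * Xballs R B Dr Db z j n)
       / (\<Sum>j\<in>cnbrs N E i. Xballs R B Dr Db z j n)"

definition hist_event :: "'a measure \<Rightarrow> nat \<Rightarrow> (nat \<Rightarrow> nat \<Rightarrow> 'a \<Rightarrow> bool) \<Rightarrow> nat
     \<Rightarrow> (nat \<Rightarrow> nat \<Rightarrow> bool) \<Rightarrow> 'a set" where
  "hist_event M N Z n h = {\<omega> \<in> space M. \<forall>t\<in>{1..n}. \<forall>j\<in>{1..N}. Z t j \<omega> = h t j}"

definition hist :: "nat \<Rightarrow> (nat \<Rightarrow> nat \<Rightarrow> 'a \<Rightarrow> bool) \<Rightarrow> nat \<Rightarrow> 'a \<Rightarrow> (nat \<Rightarrow> nat \<Rightarrow> bool)" where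
  "hist N Z n \<omega> = (\<lambda>t j. if t \<in> {1..n} \<and> j \<in> {1..N} then Z t j \<omega> else False)"

definition draw_filtration :: "'a measure \<Rightarrow> nat \<Rightarrow> (nat \<Rightarrow> nat \<Rightarrow> 'a \<Rightarrow> bool) \<Rightarrow> nat \<Rightarrow> 'a measure" where
  "draw_filtration M N Z n = vimage_algebra (space M) (hist N Z n) (count_space UNIV)"

definition Uproc :: "nat \<Rightarrow> (nat \<Rightarrow> nat) \<Rightarrow> (nat \<Rightarrow> nat) \<Rightarrow> (nat \<Rightarrow> nat \<Rightarrow> nat) \<Rightarrow> (nat \<Rightarrow> nat \<Rightarrow> nat)
     \<Rightarrow> (nat \<Rightarrow> nat \<Rightarrow> 'a \<Rightarrow> bool) \<Rightarrow> nat \<Rightarrow> nat \<Rightarrow> 'a \<Rightarrow> real" where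
  "Uproc N R B Dr Db Z j n \<omega> = Uprop R B Dr Db (hist N Z n \<omega>) j n"

text \<open>Network Polya contagion law: conditionally on the history Z_1..Z_{n-1}, the draws
  at time n are independent with P(Z_{i,n} = 1 | history) = S_{i,n-1}.\<close>
definition polya_law :: "'a measure \<Rightarrow> nat \<Rightarrow> (nat \<Rightarrow> nat \<Rightarrow> bool) \<Rightarrow> (nat \<Rightarrow> nat) \<Rightarrow> (nat \<Rightarrow> nat)
     \<Rightarrow> (nat \<Rightarrow> nat \<Rightarrow> nat) \<Rightarrow> (nat \<Rightarrow> nat \<Rightarrow> nat) \<Rightarrow> (nat \<Rightarrow> nat \<Rightarrow> 'a \<Rightarrow> bool) \<Rightarrow> bool" where
  "polya_law M N E R B Dr Db Z \<longleftrightarrow>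
     (\<forall>t j. t \<ge> 1 \<longrightarrow> j \<in> {1..N} \<longrightarrow> Z t j \<in> measurable M (count_space UNIV)) \<and>
     (\<forall>n \<ge> 1. \<forall>h (z :: nat \<Rightarrow> bool).
        measure M (hist_event M N Z (n - 1) h \<inter> {\<omega> \<in> space M. \<forall>j\<in>{1..N}. Z n j \<omega> = z j})
        = measure M (hist_event M N Z (n - 1) h) *
          (\<Prod>j\<in>{1..N}. if z j then Sprop N E R B Dr Db h j (n - 1)
                                 else 1 - Sprop N E R B Dr Db h j (n - 1)))"

definition is_martingale_wrt_draws :: "'a measure \<Rightarrow> nat \<Rightarrow> (nat \<Rightarrow> nat \<Rightarrow> 'a \<Rightarrow> bool)
     \<Rightarrow> (nat \<Rightarrow> 'a \<Rightarrow> real) \<Rightarrow> bool" where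
  "is_martingale_wrt_draws M N Z X \<longleftrightarrow>
     (\<forall>n. integrable M (X n)) \<and>
     (\<forall>n \<ge> 1. AE \<omega> in M. real_cond_exp M (draw_filtration M N Z (n - 1)) (X n) \<omega> = X (n - 1) \<omega>)"

end

(* Every urn gains exactly Delta balls per draw, so after n draws each urn holds T + n Delta
   balls.  Hence U_{i,n} = (X_{n-1} U_{i,n-1} + Delta Z_{i,n}) / X_n, and the super-urn
   proportion S_{i,n-1} is the plain average of U_{.,n-1} over the closed neighbourhood of i.
   The history up to time n-1 takes finitely many values, and on each of them the Polya law
   gives P(Z_{i,n} = 1) = S_{i,n-1}; therefore
     E[U_{i,n} | Z_1, ..., Z_{n-1}] = (X_{n-1} U_{i,n-1} + Delta S_{i,n-1}) / X_n,
   which equals U_{i,n-1} iff S_{i,n-1} = U_{i,n-1}, i.e. iff U_{i,n-1} is the average of its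
   neighbours' proportions (the neighbourhood is nonempty by connectedness). *)
theory Submission
  imports Defs
begin

lemma measure_marginal_of_product:
  fixes X :: "'i \<Rightarrow> 'a \<Rightarrow> bool"
  assumes "finite_measure M" "Ev \<in> sets M" "finite J" "K \<subseteq> J"
    and X_meas: "\<And>j. j \<in> J \<Longrightarrow> X j \<in> measurable M (count_space UNIV)"
    and p_sum: "\<And>j. j \<in> J \<Longrightarrow> p j True + p j False = 1"
    and joint: "\<And>z. measure M (Ev \<inter> {\<omega>\<in>space M. \<forall>j\<in>J. X j \<omega> = z j})
                  = measure M Ev * (\<Prod>j\<in>J. p j (z j))"
  shows "measure M (Ev \<inter> {\<omega>\<in>space M. \<forall>j\<in>K. X j \<omega> = z j}) = measure M Ev * (\<Prod>j\<in>K. p j (z j))"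
proof -
  interpret finite_measure M by fact
  define ev where "ev K z = Ev \<inter> {\<omega>\<in>space M. \<forall>j\<in>K. X j \<omega> = z j}" for K z
  have ev_sets: "ev K z \<in> sets M" if "K \<subseteq> J" for K z
  proof -
    have "finite K" using \<open>finite J\<close> that by (rule finite_subset[rotated])
    moreover have "{\<omega>\<in>space M. X j \<omega> = z j} \<in> sets M" if "j \<in> K" for j
      using measurable_sets[OF X_meas, of j "{z j}"] \<open>j \<in> K\<close> \<open>K \<subseteq> J\<close>
      by (auto simp: vimage_def Int_def conj_commute)
    ultimately show ?thesis
      unfolding ev_def using \<open>Ev \<in> sets M\<close> by (intro sets.Int sets.sets_Collect_finite_All) auto
  qed
  have "\<forall>z. measure M (ev (J - D) z) = measure M Ev * (\<Prod>j\<in>J - D. p j (z j))"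
    if "D \<subseteq> J" for D
    using finite_subset[OF that \<open>finite J\<close>] that
  proof (induction D rule: finite_subset_induct)
    case empty
    then show ?case using joint by (simp add: ev_def)
  next
    case (insert k D)
    show ?case
    proof
      fix z
      have J: "J - D = insert k (J - insert k D)" "k \<notin> J - insert k D"
        using insert by auto
      have split: "ev (J - insert k D) z = ev (J - D) (z(k := True)) \<union> ev (J - D) (z(k := False))"
        unfolding ev_def J(1) by auto
      have prod_upd: "(\<Prod>j\<in>J - D. p j ((z(k := b)) j)) = p k b * (\<Prod>j\<in>J - insert k D. p j (z j))" for b
        unfolding J(1) using J(2) \<open>finite J\<close> by (auto intro!: prod.cong)
      have "measure M (ev (J - insert k D) z)
          = measure M (ev (J - D) (z(k := True))) + measure M (ev (J - D) (z(k := False)))"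
      proof (unfold split, rule finite_measure_Union)
        show "ev (J - D) (z(k := True)) \<inter> ev (J - D) (z(k := False)) = {}"
          unfolding ev_def J(1) by auto
      qed (simp_all add: ev_sets)
      also have "\<dots> = measure M Ev * (\<Prod>j\<in>J - insert k D. p j (z j)) * (p k True + p k False)"
        using insert.IH prod_upd by (simp add: algebra_simps)
      finally show "measure M (ev (J - insert k D) z) = measure M Ev * (\<Prod>j\<in>J - insert k D. p j (z j))"
        using p_sum \<open>k \<in> J\<close> by simp
    qed
  qed
  from this[of "J - K"] \<open>K \<subseteq> J\<close> show ?thesis
    by (simp add: ev_def double_diff)
qed

lemma real_cond_exp_indicator_finite_range:
  fixes H :: "'a \<Rightarrow> 'b" and g :: "'b \<Rightarrow> real"
  assumes "finite_measure M"
    and H_meas: "H \<in> measurable M (count_space UNIV)"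
    and fin: "finite (H ` space M)"
    and A: "A \<in> sets M"
    and fibre: "\<And>h. h \<in> H ` space M \<Longrightarrow>
      measure M ({\<omega>\<in>space M. H \<omega> = h} \<inter> A) = g h * measure M {\<omega>\<in>space M. H \<omega> = h}"
  shows "AE \<omega> in M. real_cond_exp M (vimage_algebra (space M) H (count_space UNIV)) (indicator A) \<omega>
           = g (H \<omega>)"
proof -
  interpret finite_measure M by fact
  define F where "F = vimage_algebra (space M) H (count_space UNIV)"
  have sets_F: "sets F = {H -` B \<inter> space M | B. B \<in> sets (count_space UNIV)}"
    unfolding F_def by (rule sets_vimage_algebra2) simp
  interpret finite_measure_subalgebra M F
  proof
    show "subalgebra M F"
      unfolding subalgebra_def sets_F
      using measurable_sets[OF H_meas] by (auto simp: F_def)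
  qed
  define V where "V = H ` space M"
  define fib where "fib h = {\<omega>\<in>space M. H \<omega> = h}" for h
  have fib_sets: "fib h \<in> sets M" for h
    using measurable_sets[OF H_meas, of "{h}"] by (simp add: fib_def vimage_def Int_def conj_commute)
  have gH_meas: "(\<lambda>\<omega>. g (H \<omega>)) \<in> borel_measurable F"
    unfolding F_def by (rule measurable_compose[OF measurable_vimage_algebra1]) auto
  have gH_int: "integrable M (\<lambda>\<omega>. g (H \<omega>))"
  proof (rule integrable_const_bound)
    show "AE \<omega> in M. norm (g (H \<omega>)) \<le> (\<Sum>h\<in>V. \<bar>g h\<bar>)"
      using fin by (intro AE_I2) (auto simp: V_def intro: member_le_sum)
  qed (rule measurable_compose[OF H_meas], simp)
  have "AE \<omega> in M. real_cond_exp M F (indicator A) \<omega> = g (H \<omega>)"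
  proof (rule real_cond_exp_charact)
    fix A' assume "A' \<in> sets F"
    then obtain Bs where A': "A' = H -` Bs \<inter> space M"
      by (auto simp: sets_F)
    have fin': "finite (Bs \<inter> V)" using fin by (simp add: V_def)
    have sum_fib: "(\<Sum>h\<in>Bs \<inter> V. indicator (fib h) \<omega> * f h) = indicator A' \<omega> * f (H \<omega>)"
      if "\<omega> \<in> space M" for \<omega> and f :: "'b \<Rightarrow> real"
    proof -
      have "(\<Sum>h\<in>Bs \<inter> V. indicator (fib h) \<omega> * f h) = (\<Sum>h\<in>Bs \<inter> V. if H \<omega> = h then f h else 0)"
        using that by (intro sum.cong) (auto simp: fib_def)
      also have "\<dots> = indicator A' \<omega> * f (H \<omega>)"
        using fin' that by (simp add: sum.delta' A' V_def indicator_def)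
      finally show ?thesis .
    qed
    have indicator_A': "indicator A' \<omega> * indicator A \<omega> = (\<Sum>h\<in>Bs \<inter> V. indicator (fib h \<inter> A) \<omega> :: real)"
      if "\<omega> \<in> space M" for \<omega>
      using sum_fib[OF that, of "\<lambda>_. indicator A \<omega>"] by (simp add: indicator_inter_arith)
    have "(\<integral>\<omega>\<in>A'. (indicator A \<omega> :: real) \<partial>M) = (\<integral>\<omega>. (\<Sum>h\<in>Bs \<inter> V. indicator (fib h \<inter> A) \<omega>) \<partial>M)"
      unfolding set_lebesgue_integral_def
      by (intro Bochner_Integration.integral_cong) (simp_all add: indicator_A')
    also have "\<dots> = (\<Sum>h\<in>Bs \<inter> V. measure M (fib h \<inter> A))"
      using fib_sets A
      by (subst Bochner_Integration.integral_sum) (auto intro!: integrable_real_indicator simp: less_top[symmetric])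
    also have "\<dots> = (\<Sum>h\<in>Bs \<inter> V. g h * measure M (fib h))"
      using fibre by (intro sum.cong) (auto simp: V_def fib_def)
    also have "\<dots> = (\<integral>\<omega>. (\<Sum>h\<in>Bs \<inter> V. indicator (fib h) \<omega> * g h) \<partial>M)"
      using fib_sets
      by (subst Bochner_Integration.integral_sum) (auto intro!: integrable_real_indicator simp: less_top[symmetric] mult.commute)
    also have "\<dots> = (\<integral>\<omega>\<in>A'. g (H \<omega>) \<partial>M)"
      unfolding set_lebesgue_integral_def using sum_fib
      by (intro Bochner_Integration.integral_cong) auto
    finally show "(\<integral>\<omega>\<in>A'. (indicator A \<omega> :: real) \<partial>M) = (\<integral>\<omega>\<in>A'. g (H \<omega>) \<partial>M)" .
  qed (use gH_meas gH_int A in \<open>auto intro!: integrable_real_indicator simp: less_top[symmetric]\<close>)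
  then show ?thesis unfolding F_def .
qed

definition histories :: "nat \<Rightarrow> nat \<Rightarrow> (nat \<Rightarrow> nat \<Rightarrow> bool) set" where
  "histories N n = {h. \<forall>t j. h t j \<longrightarrow> t \<in> {1..n} \<and> j \<in> {1..N}}"

lemma finite_histories: "finite (histories N n)"
proof -
  have "histories N n = (\<lambda>S t j. (t, j) \<in> S) ` Pow ({1..n} \<times> {1..N})"
  proof (intro equalityI subsetI)
    fix h assume "h \<in> histories N n"
    then have "h = (\<lambda>t j. (t, j) \<in> {(t, j). h t j})" "{(t, j). h t j} \<in> Pow ({1..n} \<times> {1..N})"
      by (auto simp: histories_def)
    then show "h \<in> (\<lambda>S t j. (t, j) \<in> S) ` Pow ({1..n} \<times> {1..N})" by blast
  qed (auto simp: histories_def)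
  then show ?thesis by simp
qed

lemma hist_in_histories: "hist N Z n \<omega> \<in> histories N n"
  by (simp add: histories_def hist_def)

lemma hist_fibre_eq_hist_event:
  assumes "h \<in> histories N n"
  shows "{\<omega>\<in>space M. hist N Z n \<omega> = h} = hist_event M N Z n h"
proof -
  have "hist N Z n \<omega> = h \<longleftrightarrow> (\<forall>t\<in>{1..n}. \<forall>j\<in>{1..N}. Z t j \<omega> = h t j)" for \<omega>
  proof
    assume "hist N Z n \<omega> = h"
    then show "\<forall>t\<in>{1..n}. \<forall>j\<in>{1..N}. Z t j \<omega> = h t j"
      by (auto simp: hist_def)
  next
    assume "\<forall>t\<in>{1..n}. \<forall>j\<in>{1..N}. Z t j \<omega> = h t j"
    with assms show "hist N Z n \<omega> = h"
      by (auto simp: hist_def histories_def fun_eq_iff)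
  qed
  then show ?thesis by (auto simp: hist_event_def)
qed

definition draws_measurable :: "'a measure \<Rightarrow> nat \<Rightarrow> (nat \<Rightarrow> nat \<Rightarrow> 'a \<Rightarrow> bool) \<Rightarrow> bool" where
  "draws_measurable M N Z \<longleftrightarrow>
     (\<forall>t j. t \<ge> 1 \<longrightarrow> j \<in> {1..N} \<longrightarrow> Z t j \<in> measurable M (count_space UNIV))"

lemma draws_measurableD:
  "draws_measurable M N Z \<Longrightarrow> t \<ge> 1 \<Longrightarrow> j \<in> {1..N} \<Longrightarrow> {\<omega>\<in>space M. Z t j \<omega> = b} \<in> sets M"
  using measurable_sets[of "Z t j" M "count_space UNIV" "{b}"]
  by (simp add: draws_measurable_def vimage_def Int_def conj_commute)

lemma hist_event_in_sets:
  assumes "draws_measurable M N Z"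
  shows "hist_event M N Z n h \<in> sets M"
  unfolding hist_event_def
  using draws_measurableD[OF assms] by (intro sets.sets_Collect_finite_All) auto

lemma measurable_hist:
  assumes "draws_measurable M N Z"
  shows "hist N Z n \<in> measurable M (count_space UNIV)"
proof -
  have "hist N Z n \<in> measurable M (count_space (histories N n))"
  proof (unfold measurable_count_space_eq2[OF finite_histories], intro conjI ballI)
    fix h assume "h \<in> histories N n"
    then show "hist N Z n -` {h} \<inter> space M \<in> sets M"
      using hist_fibre_eq_hist_event[of h N n M Z] hist_event_in_sets[OF assms]
      by (simp add: vimage_def Int_def conj_commute)
  qed (simp add: hist_in_histories)
  then show ?thesis by (rule measurable_compose[OF _ measurable_count_space])
qed

lemma polya_law_draws_measurable: "polya_law M N E R B Dr Db Z \<Longrightarrow> draws_measurable M N Z"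
  by (simp add: polya_law_def draws_measurable_def)

lemma subalgebra_draw_filtration:
  assumes "polya_law M N E R B Dr Db Z"
  shows "subalgebra M (draw_filtration M N Z n)"
  using measurable_sets[OF measurable_hist[OF polya_law_draws_measurable[OF assms]]]
  by (auto simp: subalgebra_def draw_filtration_def sets_vimage_algebra2)

lemma measurable_draw_filtration:
  "(\<lambda>\<omega>. f (hist N Z n \<omega>)) \<in> borel_measurable (draw_filtration M N Z n)"
  unfolding draw_filtration_def by (rule measurable_compose[OF measurable_vimage_algebra1]) auto

lemma integrable_fun_hist:
  fixes f :: "(nat \<Rightarrow> nat \<Rightarrow> bool) \<Rightarrow> real"
  assumes "finite_measure M" "polya_law M N E R B Dr Db Z"
  shows "integrable M (\<lambda>\<omega>. f (hist N Z n \<omega>))"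
proof -
  interpret finite_measure M by fact
  show ?thesis
  proof (rule integrable_const_bound)
    show "AE \<omega> in M. norm (f (hist N Z n \<omega>)) \<le> (\<Sum>h\<in>histories N n. \<bar>f h\<bar>)"
      using member_le_sum[where f = "\<lambda>h. \<bar>f h\<bar>", OF hist_in_histories _ finite_histories] by (intro AE_I2) simp
    show "(\<lambda>\<omega>. f (hist N Z n \<omega>)) \<in> borel_measurable M"
      by (rule measurable_compose[OF measurable_hist[OF polya_law_draws_measurable[OF assms(2)]]]) simp
  qed
qed

lemma polya_law_red_draw:
  assumes "finite_measure M" "polya_law M N E R B Dr Db Z" "i \<in> {1..N}"
  shows "measure M (hist_event M N Z n h \<inter> {\<omega>\<in>space M. Z (Suc n) i \<omega>})
       = measure M (hist_event M N Z n h) * Sprop N E R B Dr Db h i n"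
proof -
  define p where "p j b = (if b then Sprop N E R B Dr Db h j n else 1 - Sprop N E R B Dr Db h j n)" for j b
  have "measure M (hist_event M N Z n h \<inter> {\<omega>\<in>space M. \<forall>j\<in>{i}. Z (Suc n) j \<omega> = True})
      = measure M (hist_event M N Z n h) * (\<Prod>j\<in>{i}. p j True)"
  proof (rule measure_marginal_of_product[OF assms(1)])
    show "hist_event M N Z n h \<in> sets M"
      by (rule hist_event_in_sets[OF polya_law_draws_measurable[OF assms(2)]])
    fix z
    have "measure M (hist_event M N Z (Suc n - 1) h \<inter> {\<omega>\<in>space M. \<forall>j\<in>{1..N}. Z (Suc n) j \<omega> = z j})
        = measure M (hist_event M N Z (Suc n - 1) h) * (\<Prod>j\<in>{1..N}. p j (z j))"
      using conjunct2[OF assms(2)[unfolded polya_law_def], rule_format, of "Suc n" h z, unfolded diff_Suc_1]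
      by (simp add: p_def)
    then show "measure M (hist_event M N Z n h \<inter> {\<omega>\<in>space M. \<forall>j\<in>{1..N}. Z (Suc n) j \<omega> = z j})
        = measure M (hist_event M N Z n h) * (\<Prod>j\<in>{1..N}. p j (z j))"
      by simp
    show "Z (Suc n) j \<in> measurable M (count_space UNIV)" if "j \<in> {1..N}" for j
      using assms(2) that by (simp add: polya_law_def)
  qed (use assms(3) in \<open>auto simp: p_def\<close>)
  then show ?thesis by (simp add: p_def)
qed

lemma cond_exp_red_draw:
  assumes "finite_measure M" "polya_law M N E R B Dr Db Z" "i \<in> {1..N}"
  shows "AE \<omega> in M. real_cond_exp M (draw_filtration M N Z n) (indicator {\<omega>\<in>space M. Z (Suc n) i \<omega>}) \<omega>
           = Sprop N E R B Dr Db (hist N Z n \<omega>) i n"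
  unfolding draw_filtration_def
proof (rule real_cond_exp_indicator_finite_range)
  show "finite_measure M" by fact
  show "hist N Z n \<in> measurable M (count_space UNIV)"
    by (rule measurable_hist[OF polya_law_draws_measurable[OF assms(2)]])
  show "finite (hist N Z n ` space M)"
    by (rule finite_subset[OF _ finite_histories[of N n]]) (auto simp: hist_in_histories)
  show "{\<omega>\<in>space M. Z (Suc n) i \<omega>} \<in> sets M"
    using draws_measurableD[OF polya_law_draws_measurable[OF assms(2)] _ assms(3), of "Suc n" True] by simp
  fix h assume "h \<in> hist N Z n ` space M"
  then have "h \<in> histories N n"
    by (auto simp: hist_in_histories)
  then have "{\<omega>\<in>space M. hist N Z n \<omega> = h} = hist_event M N Z n h"
    by (rule hist_fibre_eq_hist_event)
  then show "measure M ({\<omega>\<in>space M. hist N Z n \<omega> = h} \<inter> {\<omega>\<in>space M. Z (Suc n) i \<omega>})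
      = Sprop N E R B Dr Db h i n * measure M {\<omega>\<in>space M. hist N Z n \<omega> = h}"
    using polya_law_red_draw[OF assms] by simp
qed

lemma nbrs_nonempty:
  assumes "simple_graph N E" "connected_graph N E" "N \<ge> 2" "i \<in> {1..N}"
  shows "nbrs N E i \<noteq> {}"
proof -
  define j where "j = (if i = 1 then 2 else 1 :: nat)"
  have j: "j \<in> {1..N}" "j \<noteq> i" using assms(3,4) by (auto simp: j_def)
  then have "E\<^sup>*\<^sup>* i j" using assms(2,4) unfolding connected_graph_def by blast
  then obtain v where "E i v"
    using j(2) by (cases rule: converse_rtranclpE) auto
  then have "v \<in> nbrs N E i" using assms(1) by (auto simp: simple_graph_def nbrs_def)
  then show ?thesis by blast
qed

lemma weighted_update_eq_iff:
  fixes a s c d k :: real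
  assumes "c \<ge> 0" "d > 0" "k > 0"
  shows "(c * a + d * ((a + s) / (k + 1))) / (c + d) = a \<longleftrightarrow> 1 / k * s = a"
proof -
  have "(c * a + d * ((a + s) / (k + 1))) / (c + d) = a \<longleftrightarrow> d * ((a + s) / (k + 1)) = d * a"
    using assms by (auto simp: divide_eq_eq algebra_simps)
  also have "\<dots> \<longleftrightarrow> a + s = a * (k + 1)"
    using assms by (auto simp: divide_eq_eq)
  also have "\<dots> \<longleftrightarrow> 1 / k * s = a"
    using assms by (auto simp: field_simps)
  finally show ?thesis .
qed

locale homogeneous_polya = prob_space M
  for M :: "'a measure" +
  fixes N :: nat and E :: "nat \<Rightarrow> nat \<Rightarrow> bool" and R B :: "nat \<Rightarrow> nat"
    and Dr Db :: "nat \<Rightarrow> nat \<Rightarrow> nat" and Z :: "nat \<Rightarrow> nat \<Rightarrow> 'a \<Rightarrow> bool" and T \<Delta> :: nat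
  assumes simple: "simple_graph N E"
    and total_balls: "\<And>j. j \<in> {1..N} \<Longrightarrow> R j + B j = T"
    and T_pos: "T > 0"
    and \<Delta>_pos: "\<Delta> > 0"
    and red_reinforcement: "Dr = (\<lambda>_ _. \<Delta>)"
    and black_reinforcement: "Db = (\<lambda>_ _. \<Delta>)"
    and law: "polya_law M N E R B Dr Db Z"
begin

abbreviation U :: "nat \<Rightarrow> nat \<Rightarrow> 'a \<Rightarrow> real" where
  "U \<equiv> Uproc N R B Dr Db Z"

definition urn_size :: "nat \<Rightarrow> real" where
  "urn_size n = real T + real n * real \<Delta>"

lemma urn_size_pos: "urn_size n > 0"
  using T_pos by (simp add: urn_size_def add_pos_nonneg)

lemma urn_size_Suc: "urn_size (Suc n) = urn_size n + real \<Delta>"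
  by (simp add: urn_size_def algebra_simps)

lemma Xballs_eq_urn_size:
  assumes "j \<in> {1..N}"
  shows "Xballs R B Dr Db z j n = urn_size n"
proof -
  have "(\<Sum>t\<in>{1..n}. if z t j then real (Dr j t) else real (Db j t)) = real n * real \<Delta>"
    unfolding red_reinforcement black_reinforcement by simp
  then show ?thesis
    using total_balls[OF assms] by (simp add: Xballs_def urn_size_def flip: of_nat_add)
qed

lemma urn_size_mult_Uproc:
  assumes "j \<in> {1..N}"
  shows "urn_size n * U j n \<omega> = real (R j) + (\<Sum>t\<in>{1..n}. if Z t j \<omega> then real \<Delta> else 0)"
proof -
  have "(\<Sum>t\<in>{1..n}. if hist N Z n \<omega> t j then real (Dr j t) else 0)
      = (\<Sum>t\<in>{1..n}. if Z t j \<omega> then real \<Delta> else 0)"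
    using assms by (intro sum.cong) (auto simp: hist_def red_reinforcement)
  then show ?thesis
    using urn_size_pos[of n] by (simp add: Uproc_def Uprop_def Xballs_eq_urn_size[OF assms])
qed

lemma Uproc_Suc:
  assumes "j \<in> {1..N}" "\<omega> \<in> space M"
  shows "U j (Suc n) \<omega>
    = (urn_size n * U j n \<omega> + real \<Delta> * indicator {\<omega>\<in>space M. Z (Suc n) j \<omega>} \<omega>) / urn_size (Suc n)"
  using urn_size_mult_Uproc[OF assms(1), of n \<omega>] urn_size_mult_Uproc[OF assms(1), of "Suc n" \<omega>] urn_size_pos[of "Suc n"] assms(2)
  by (simp add: field_simps indicator_def)

lemma Sprop_eq_closed_nbrs_average:
  assumes "i \<in> {1..N}"
  shows "Sprop N E R B Dr Db (hist N Z n \<omega>) i n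
    = (U i n \<omega> + (\<Sum>j\<in>nbrs N E i. U j n \<omega>)) / (real (card (nbrs N E i)) + 1)"
proof -
  have closed: "cnbrs N E i = insert i (nbrs N E i)" "i \<notin> nbrs N E i"
      "finite (nbrs N E i)" "cnbrs N E i \<subseteq> {1..N}"
    using simple assms by (auto simp: cnbrs_def nbrs_def simple_graph_def)
  have numerator: "(\<Sum>j\<in>cnbrs N E i. Uprop R B Dr Db (hist N Z n \<omega>) j n * Xballs R B Dr Db (hist N Z n \<omega>) j n)
      = (U i n \<omega> + (\<Sum>j\<in>nbrs N E i. U j n \<omega>)) * urn_size n"
  proof -
    have "(\<Sum>j\<in>cnbrs N E i. Uprop R B Dr Db (hist N Z n \<omega>) j n * Xballs R B Dr Db (hist N Z n \<omega>) j n)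
        = (\<Sum>j\<in>cnbrs N E i. U j n \<omega>) * urn_size n"
      unfolding sum_distrib_right using closed(4)
      by (intro sum.cong) (auto simp: Xballs_eq_urn_size Uproc_def)
    then show ?thesis using closed(2,3) by (simp add: closed(1))
  qed
  have denominator: "(\<Sum>j\<in>cnbrs N E i. Xballs R B Dr Db (hist N Z n \<omega>) j n)
      = (real (card (nbrs N E i)) + 1) * urn_size n"
  proof -
    have "(\<Sum>j\<in>cnbrs N E i. Xballs R B Dr Db (hist N Z n \<omega>) j n) = (\<Sum>j\<in>cnbrs N E i. urn_size n)"
      using closed(4) by (intro sum.cong) (auto simp: Xballs_eq_urn_size)
    then show ?thesis using closed(2,3) by (simp add: closed(1) algebra_simps)
  qed
  show ?thesis
    using urn_size_pos[of n] by (simp add: Sprop_def numerator denominator)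
qed

lemma integrable_Uproc: "integrable M (U j n)"
  using integrable_fun_hist[OF finite_measure_axioms law, of "\<lambda>h. Uprop R B Dr Db h j n"]
  by (simp add: Uproc_def[abs_def])

lemma cond_exp_Uproc_Suc:
  assumes "i \<in> {1..N}"
  shows "AE \<omega> in M. real_cond_exp M (draw_filtration M N Z n) (U i (Suc n)) \<omega>
    = (urn_size n * U i n \<omega> + real \<Delta> * Sprop N E R B Dr Db (hist N Z n \<omega>) i n) / urn_size (Suc n)"
proof -
  define F where "F = draw_filtration M N Z n"
  interpret finite_measure_subalgebra M F
    by unfold_locales (simp add: F_def subalgebra_draw_filtration[OF law])
  define red :: "'a \<Rightarrow> real" where "red = indicator {\<omega>\<in>space M. Z (Suc n) i \<omega>}"
  define \<alpha> \<beta> where "\<alpha> = urn_size n / urn_size (Suc n)" and "\<beta> = real \<Delta> / urn_size (Suc n)"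
  have red_meas: "{\<omega>\<in>space M. Z (Suc n) i \<omega>} \<in> sets M"
    using draws_measurableD[OF polya_law_draws_measurable[OF law] _ assms, of "Suc n" True] by simp
  then have red_int: "integrable M red"
    unfolding red_def by (intro integrable_real_indicator) (simp_all add: less_top[symmetric])
  have U_meas: "U i n \<in> borel_measurable F"
    unfolding F_def Uproc_def[abs_def] by (rule measurable_draw_filtration)
  have "AE \<omega> in M. real_cond_exp M F (U i (Suc n)) \<omega> = real_cond_exp M F (\<lambda>\<omega>. \<alpha> * U i n \<omega> + \<beta> * red \<omega>) \<omega>"
    using Uproc_Suc[OF assms] urn_size_pos[of "Suc n"] red_int integrable_Uproc
    by (intro real_cond_exp_cong AE_I2) (auto simp: \<alpha>_def \<beta>_def red_def add_divide_distrib)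
  moreover have "AE \<omega> in M. real_cond_exp M F (\<lambda>\<omega>. \<alpha> * U i n \<omega> + \<beta> * red \<omega>) \<omega>
      = real_cond_exp M F (\<lambda>\<omega>. \<alpha> * U i n \<omega>) \<omega> + real_cond_exp M F (\<lambda>\<omega>. \<beta> * red \<omega>) \<omega>"
    using integrable_Uproc red_int by (intro real_cond_exp_add) auto
  moreover have "AE \<omega> in M. real_cond_exp M F (\<lambda>\<omega>. \<alpha> * U i n \<omega>) \<omega> = \<alpha> * U i n \<omega>"
    using real_cond_exp_cmult[OF integrable_Uproc, of \<alpha> i n] real_cond_exp_F_meas[OF integrable_Uproc U_meas]
    by eventually_elim simp
  moreover have "AE \<omega> in M. real_cond_exp M F (\<lambda>\<omega>. \<beta> * red \<omega>) \<omega>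
      = \<beta> * Sprop N E R B Dr Db (hist N Z n \<omega>) i n"
    using real_cond_exp_cmult[OF red_int, of \<beta>] cond_exp_red_draw[OF finite_measure_axioms law assms, of n]
    unfolding red_def F_def by eventually_elim simp
  ultimately show ?thesis
    unfolding F_def[symmetric]
    by eventually_elim (simp add: \<alpha>_def \<beta>_def add_divide_distrib)
qed

lemma martingale_step_iff_nbrs_average:
  assumes "i \<in> {1..N}" "nbrs N E i \<noteq> {}"
  shows "(AE \<omega> in M. real_cond_exp M (draw_filtration M N Z n) (U i (Suc n)) \<omega> = U i n \<omega>)
    \<longleftrightarrow> (AE \<omega> in M. 1 / real (card (nbrs N E i)) * (\<Sum>j\<in>nbrs N E i. U j n \<omega>) = U i n \<omega>)"
proof -
  have k_pos: "real (card (nbrs N E i)) > 0"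
    using assms(2) finite_subset[of "nbrs N E i" "{1..N}"] by (auto simp: nbrs_def card_gt_0_iff)
  have update_iff: "(urn_size n * U i n \<omega> + real \<Delta> * Sprop N E R B Dr Db (hist N Z n \<omega>) i n) / urn_size (Suc n) = U i n \<omega>
      \<longleftrightarrow> 1 / real (card (nbrs N E i)) * (\<Sum>j\<in>nbrs N E i. U j n \<omega>) = U i n \<omega>" for \<omega>
    unfolding Sprop_eq_closed_nbrs_average[OF assms(1)] urn_size_Suc
    using less_imp_le[OF urn_size_pos] \<Delta>_pos k_pos by (intro weighted_update_eq_iff) auto
  note cond_exp = cond_exp_Uproc_Suc[OF assms(1), of n]
  show ?thesis
  proof
    assume "AE \<omega> in M. real_cond_exp M (draw_filtration M N Z n) (U i (Suc n)) \<omega> = U i n \<omega>"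
    with cond_exp show "AE \<omega> in M. 1 / real (card (nbrs N E i)) * (\<Sum>j\<in>nbrs N E i. U j n \<omega>) = U i n \<omega>"
      by eventually_elim (metis update_iff)
  next
    assume "AE \<omega> in M. 1 / real (card (nbrs N E i)) * (\<Sum>j\<in>nbrs N E i. U j n \<omega>) = U i n \<omega>"
    with cond_exp show "AE \<omega> in M. real_cond_exp M (draw_filtration M N Z n) (U i (Suc n)) \<omega> = U i n \<omega>"
      by eventually_elim (metis update_iff)
  qed
qed

end

theorem theorem1:
  fixes M :: "'a measure" and N :: nat and E :: "nat \<Rightarrow> nat \<Rightarrow> bool"
    and R B :: "nat \<Rightarrow> nat" and Dr Db :: "nat \<Rightarrow> nat \<Rightarrow> nat"
    and Z :: "nat \<Rightarrow> nat \<Rightarrow> 'a \<Rightarrow> bool" and T \<Delta> :: nat and i :: nat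
  assumes "prob_space M"
    and "N \<ge> 2"
    and "simple_graph N E" and "connected_graph N E"
    and "\<forall>j\<in>{1..N}. R j > 0 \<and> B j > 0"
    and "\<forall>j\<in>{1..N}. R j + B j = T"
    and "\<Delta> > 0"
    and "\<forall>j t. Dr j t = \<Delta> \<and> Db j t = \<Delta>"
    and "polya_law M N E R B Dr Db Z"
    and "i \<in> {1..N}"
  shows "is_martingale_wrt_draws M N Z (Uproc N R B Dr Db Z i) \<longleftrightarrow>
         (AE \<omega> in M. \<forall>n \<ge> 1.
            (1 / real (card (nbrs N E i))) * (\<Sum>j\<in>nbrs N E i. Uproc N R B Dr Db Z j (n - 1) \<omega>)
              = Uproc N R B Dr Db Z i (n - 1) \<omega>)"
proof -
  interpret homogeneous_polya M N E R B Dr Db Z T \<Delta>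
  proof (intro homogeneous_polya.intro homogeneous_polya_axioms.intro)
    show "T > 0" using assms(5,6,10) by force
    show "Dr = (\<lambda>_ _. \<Delta>)" "Db = (\<lambda>_ _. \<Delta>)" using assms(8) by auto
    show "\<And>j. j \<in> {1..N} \<Longrightarrow> R j + B j = T" using assms(6) by blast
  qed (fact assms)+
  have nbrs: "nbrs N E i \<noteq> {}"
    using assms(3,4,2,10) by (rule nbrs_nonempty)
  have ge_1_iff: "(\<forall>n\<ge>1. P n) \<longleftrightarrow> (\<forall>m. P (Suc m))" for P :: "nat \<Rightarrow> bool"
    by (auto simp: Suc_le_eq gr0_conv_Suc)
  have "is_martingale_wrt_draws M N Z (U i) \<longleftrightarrow>
      (\<forall>m. AE \<omega> in M. real_cond_exp M (draw_filtration M N Z m) (U i (Suc m)) \<omega> = U i m \<omega>)"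
    unfolding is_martingale_wrt_draws_def ge_1_iff by (simp add: integrable_Uproc)
  also have "\<dots> \<longleftrightarrow> (\<forall>m. AE \<omega> in M. 1 / real (card (nbrs N E i)) * (\<Sum>j\<in>nbrs N E i. U j m \<omega>) = U i m \<omega>)"
    using martingale_step_iff_nbrs_average[OF assms(10) nbrs] by simp
  also have "\<dots> \<longleftrightarrow> (AE \<omega> in M. \<forall>m. 1 / real (card (nbrs N E i)) * (\<Sum>j\<in>nbrs N E i. U j m \<omega>) = U i m \<omega>)"
    by (rule AE_all_countable[symmetric])
  finally show ?thesis
    unfolding ge_1_iff by simp
qed

end
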